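(* Let $A$ be a non-zero $n\times m$ matrix with entries in $[0,1]$, with value $v$, and let $y^*$ be the minimax strategy of the column player used by LRCA. Suppose the row player follows a no-regret algorithm having the stability property with respect to $y^*$, and the column player plays the LRCA algorithm. Then for every $\varepsilon>0$ there exists $l\in\mathbb{N}$ such that $f(x_l)-v\le\varepsilon$.
   Context: Repeated two-player zero-sum game: at round $t$ the row player plays $x_t\in\Delta_n$ and the column player $y_t\in\Delta_m$; the row player minimizes, the column player maximizes $x_t^\top Ay_t$. $v$ is the value of the game and $f(x):=\max_{y\in\Delta_m}x^\top Ay$; a minimax strategy of the column player is $y$ with $\min_{x\in\Delta_n}x^\top Ay=v$. The row player's algorithm chooses $x_{t+1}$ from the history; it is no-regret if for every sequence of column strategies, $\lim_{T\to\infty}\big(\min_{i}\frac1T\sum_{t=1}^Te_i^\top Ay_t-\frac1T\sum_{t=1}^Tx_t^\top Ay_t\big)=0$. It has the stability property if, for every $t$, $y_t=y^*$ implies $x_{t+1}=x_t$. LRCA for the column player (who knows $A$): at odd rounds $y_t=y^*$; at even rounds $t$, $e_t\in\arg\max_{e\in\{e_1,\dots,e_m\}}x_{t-1}^\top Ae$, $\alpha_t=\frac{f(x_{t-1})-v}{\max(n/4,2)}$, $y_t=(1-\alpha_t)y^*+\alpha_te_t$. *)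

theory Defs
  imports Complex_Main
begin

text \<open>Vectors are functions nat => real; the simplex of dimension n consists of
  nonnegative vectors supported on indices below n and summing to 1.
  A matrix is a function nat => nat => real, row index i < n, column index j < m.\<close>

definition simplex :: "nat \<Rightarrow> (nat \<Rightarrow> real) set" where
  "simplex n = {x. (\<forall>i<n. 0 \<le> x i) \<and> (\<forall>i\<ge>n. x i = 0) \<and> (\<Sum>i<n. x i) = 1}"

definition unitvec :: "nat \<Rightarrow> nat \<Rightarrow> real" where
  "unitvec j = (\<lambda>k. if k = j then 1 else 0)"

definition payoff :: "nat \<Rightarrow> nat \<Rightarrow> (nat \<Rightarrow> nat \<Rightarrow> real) \<Rightarrow> (nat \<Rightarrow> real) \<Rightarrow> (nat \<Rightarrow> real) \<Rightarrow> real" where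
  "payoff n m A x y = (\<Sum>i<n. \<Sum>j<m. x i * A i j * y j)"

definition fval :: "nat \<Rightarrow> nat \<Rightarrow> (nat \<Rightarrow> nat \<Rightarrow> real) \<Rightarrow> (nat \<Rightarrow> real) \<Rightarrow> real" where
  "fval n m A x = Sup ((\<lambda>y. payoff n m A x y) ` simplex m)"

definition game_value :: "nat \<Rightarrow> nat \<Rightarrow> (nat \<Rightarrow> nat \<Rightarrow> real) \<Rightarrow> real" where
  "game_value n m A = Inf (fval n m A ` simplex n)"

definition minimax_col :: "nat \<Rightarrow> nat \<Rightarrow> (nat \<Rightarrow> nat \<Rightarrow> real) \<Rightarrow> (nat \<Rightarrow> real) \<Rightarrow> bool" where
  "minimax_col n m A y \<longleftrightarrow> y \<in> simplex m \<and>
     Inf ((\<lambda>x. payoff n m A x y) ` simplex n) = game_value n m A"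

text \<open>A (deterministic) row algorithm maps the history [y_1,...,y_t] of column
  strategies to x_{t+1}; in particular x_1 = alg [].\<close>
definition play :: "((nat \<Rightarrow> real) list \<Rightarrow> (nat \<Rightarrow> real)) \<Rightarrow> (nat \<Rightarrow> nat \<Rightarrow> real) \<Rightarrow> nat \<Rightarrow> (nat \<Rightarrow> real)" where
  "play alg y t = alg (map y [1..<t])"

definition valid_alg :: "nat \<Rightarrow> nat \<Rightarrow> ((nat \<Rightarrow> real) list \<Rightarrow> (nat \<Rightarrow> real)) \<Rightarrow> bool" where
  "valid_alg n m alg \<longleftrightarrow> (\<forall>h. set h \<subseteq> simplex m \<longrightarrow> alg h \<in> simplex n)"

definition no_regret :: "nat \<Rightarrow> nat \<Rightarrow> (nat \<Rightarrow> nat \<Rightarrow> real) \<Rightarrow> ((nat \<Rightarrow> real) list \<Rightarrow> (nat \<Rightarrow> real)) \<Rightarrow> bool" where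
  "no_regret n m A alg \<longleftrightarrow>
     (\<forall>y. (\<forall>t. y t \<in> simplex m) \<longrightarrow>
        (\<lambda>T. Min ((\<lambda>i. (1 / real T) * (\<Sum>t=1..T. payoff n m A (unitvec i) (y t))) ` {..<n})
             - (1 / real T) * (\<Sum>t=1..T. payoff n m A (play alg y t) (y t))) \<longlonglongrightarrow> 0)"

definition stability_prop :: "nat \<Rightarrow> ((nat \<Rightarrow> real) list \<Rightarrow> (nat \<Rightarrow> real)) \<Rightarrow> (nat \<Rightarrow> real) \<Rightarrow> bool" where
  "stability_prop m alg ystar \<longleftrightarrow> (\<forall>h. set h \<subseteq> simplex m \<longrightarrow> alg (h @ [ystar]) = alg h)"

text \<open>The column sequence y is generated by LRCA against the row algorithm
  (any tie-breaking in the argmax).\<close>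
definition lrca :: "nat \<Rightarrow> nat \<Rightarrow> (nat \<Rightarrow> nat \<Rightarrow> real) \<Rightarrow> (nat \<Rightarrow> real) \<Rightarrow>
    ((nat \<Rightarrow> real) list \<Rightarrow> (nat \<Rightarrow> real)) \<Rightarrow> (nat \<Rightarrow> nat \<Rightarrow> real) \<Rightarrow> bool" where
  "lrca n m A ystar alg y \<longleftrightarrow>
     (\<forall>t\<ge>1. odd t \<longrightarrow> y t = ystar) \<and>
     (\<forall>t\<ge>1. even t \<longrightarrow>
        (\<exists>j<m. (\<forall>j'<m. payoff n m A (play alg y (t - 1)) (unitvec j')
                         \<le> payoff n m A (play alg y (t - 1)) (unitvec j)) \<and>
           (let \<alpha> = (fval n m A (play alg y (t - 1)) - game_value n m A) / max (real n / 4) 2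
            in y t = (\<lambda>k. (1 - \<alpha>) * ystar k + \<alpha> * unitvec j k))))"

end

theory Submission
  imports Defs
begin

(* If f(x_t) - v stayed above \<epsilon> for all t, stability would give x_t = x_(t-1) in every even
   round, so the LRCA deviation e_t is a best response to x_t and x_t^T A y_t \<ge> v + (f(x_t) - v)^2/c
   \<ge> v + \<epsilon>^2/c there, while y* secures v in odd rounds.  The average of x_t^T A y_t would thus
   exceed v + \<epsilon>^2/(2c), whereas by weak duality the best fixed row averages at most v: the
   regret in the no-regret property would stay below -\<epsilon>^2/(2c) instead of tending to 0. *)

lemma payoff_unitvec_left:
  assumes "i < n"
  shows "payoff n m A (unitvec i) y = (\<Sum>j<m. A i j * y j)"
proof -
  have "payoff n m A (unitvec i) y = (\<Sum>k<n. if k = i then (\<Sum>j<m. A k j * y j) else 0)"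
    unfolding payoff_def unitvec_def by (rule sum.cong) auto
  also have "\<dots> = (\<Sum>j<m. A i j * y j)" using assms by (simp add: sum.delta)
  finally show ?thesis .
qed

lemma payoff_unitvec_right:
  assumes "j < m"
  shows "payoff n m A x (unitvec j) = (\<Sum>i<n. x i * A i j)"
proof -
  have "payoff n m A x (unitvec j) = (\<Sum>i<n. \<Sum>k<m. if k = j then x i * A i j else 0)"
    unfolding payoff_def unitvec_def by (intro sum.cong) auto
  also have "\<dots> = (\<Sum>i<n. x i * A i j)" using assms by (simp add: sum.delta)
  finally show ?thesis .
qed

lemma payoff_expand_left: "payoff n m A x y = (\<Sum>i<n. x i * payoff n m A (unitvec i) y)"
proof -
  have "(\<Sum>i<n. x i * payoff n m A (unitvec i) y) = (\<Sum>i<n. x i * (\<Sum>j<m. A i j * y j))"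
    by (rule sum.cong) (auto simp: payoff_unitvec_left)
  also have "\<dots> = payoff n m A x y"
    unfolding payoff_def by (simp add: sum_distrib_left mult.assoc)
  finally show ?thesis by simp
qed

lemma payoff_expand_right: "payoff n m A x y = (\<Sum>j<m. y j * payoff n m A x (unitvec j))"
proof -
  have "(\<Sum>j<m. y j * payoff n m A x (unitvec j)) = (\<Sum>j<m. y j * (\<Sum>i<n. x i * A i j))"
    by (rule sum.cong) (auto simp: payoff_unitvec_right)
  also have "\<dots> = payoff n m A x y"
    unfolding payoff_def by (subst sum.swap) (simp add: sum_distrib_left mult_ac)
  finally show ?thesis by simp
qed

lemma payoff_mix_right:
  "payoff n m A x (\<lambda>k. (1 - a) * y k + a * z k)
     = (1 - a) * payoff n m A x y + a * payoff n m A x z"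
proof -
  have "x i * A i j * ((1 - a) * y j + a * z j) = (1 - a) * (x i * A i j * y j) + a * (x i * A i j * z j)"
    for i j by (simp add: algebra_simps)
  then show ?thesis unfolding payoff_def by (simp only: sum.distrib sum_distrib_left)
qed

lemma payoff_nonneg:
  assumes "\<forall>i<n. \<forall>j<m. 0 \<le> A i j" "x \<in> simplex n" "y \<in> simplex m"
  shows "0 \<le> payoff n m A x y"
  using assms unfolding payoff_def simplex_def by (auto intro!: sum_nonneg)

lemma unitvec_in_simplex: "j < m \<Longrightarrow> unitvec j \<in> simplex m"
  unfolding simplex_def unitvec_def by (auto simp: sum.delta)

lemma mix_in_simplex:
  assumes "y \<in> simplex m" "z \<in> simplex m" "0 \<le> a" "a \<le> 1"
  shows "(\<lambda>k. (1 - a) * y k + a * z k) \<in> simplex m"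
proof -
  have "(\<Sum>k<m. (1 - a) * y k + a * z k) = (1 - a) * (\<Sum>k<m. y k) + a * (\<Sum>k<m. z k)"
    by (simp add: sum.distrib sum_distrib_left)
  then show ?thesis using assms by (auto simp: simplex_def)
qed

lemma payoff_le_if_pure_le:
  assumes "y \<in> simplex m" "\<forall>j<m. payoff n m A x (unitvec j) \<le> M"
  shows "payoff n m A x y \<le> M"
proof -
  have "payoff n m A x y = (\<Sum>j<m. y j * payoff n m A x (unitvec j))"
    by (rule payoff_expand_right)
  also have "\<dots> \<le> (\<Sum>j<m. y j * M)"
    using assms by (intro sum_mono mult_left_mono) (auto simp: simplex_def)
  also have "\<dots> = M" using assms(1) by (simp add: simplex_def sum_distrib_right[symmetric])
  finally show ?thesis .
qed

lemma fval_eq_pure_best_response: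
  assumes "j < m" "\<forall>j'<m. payoff n m A x (unitvec j') \<le> payoff n m A x (unitvec j)"
  shows "fval n m A x = payoff n m A x (unitvec j)"
  unfolding fval_def
  by (rule cSup_eq_maximum) (use assms unitvec_in_simplex payoff_le_if_pure_le in auto)

lemma pure_best_response_exists:
  assumes "0 < m"
  obtains j where "j < m" "\<forall>j'<m. payoff n m A x (unitvec j') \<le> payoff n m A x (unitvec j)"
proof -
  let ?P = "(\<lambda>j. payoff n m A x (unitvec j)) ` {..<m}"
  have "Max ?P \<in> ?P" using assms by (intro Max_in) auto
  then obtain j where "j < m" "payoff n m A x (unitvec j) = Max ?P" by auto
  then show ?thesis using that by auto
qed

lemma payoff_le_fval:
  assumes "0 < m" "y \<in> simplex m"
  shows "payoff n m A x y \<le> fval n m A x"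
proof -
  obtain j where j: "j < m" "\<forall>j'<m. payoff n m A x (unitvec j') \<le> payoff n m A x (unitvec j)"
    using pure_best_response_exists[OF assms(1)] .
  show ?thesis
    unfolding fval_eq_pure_best_response[OF j] using assms(2) j(2) by (rule payoff_le_if_pure_le)
qed

lemma fval_nonneg:
  assumes "\<forall>i<n. \<forall>j<m. 0 \<le> A i j" "x \<in> simplex n" "0 < m"
  shows "0 \<le> fval n m A x"
  using payoff_nonneg[OF assms(1,2) unitvec_in_simplex] payoff_le_fval[OF assms(3) unitvec_in_simplex]
    assms(3) by (meson order_trans)

lemma fval_le_one:
  assumes "\<forall>i<n. \<forall>j<m. A i j \<le> 1" "x \<in> simplex n" "0 < m"
  shows "fval n m A x \<le> 1"
proof -
  obtain j where j: "j < m" "\<forall>j'<m. payoff n m A x (unitvec j') \<le> payoff n m A x (unitvec j)"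
    using pure_best_response_exists[OF assms(3)] .
  have "payoff n m A x (unitvec j) = (\<Sum>i<n. x i * A i j)" by (rule payoff_unitvec_right[OF j(1)])
  also have "\<dots> \<le> (\<Sum>i<n. x i * 1)"
    using assms j by (intro sum_mono mult_left_mono) (auto simp: simplex_def)
  also have "\<dots> = 1" using assms(2) by (simp add: simplex_def)
  finally show ?thesis unfolding fval_eq_pure_best_response[OF j] .
qed

lemma game_value_le_fval:
  assumes "\<forall>i<n. \<forall>j<m. 0 \<le> A i j" "0 < m" "x \<in> simplex n"
  shows "game_value n m A \<le> fval n m A x"
proof -
  have "bdd_below (fval n m A ` simplex n)"
    by (rule bdd_belowI2[of _ 0]) (rule fval_nonneg[OF assms(1) _ assms(2)])
  then show ?thesis unfolding game_value_def by (rule cInf_lower[rotated]) (use assms(3) in blast)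
qed

lemma game_value_nonneg:
  assumes "\<forall>i<n. \<forall>j<m. 0 \<le> A i j" "0 < n" "0 < m"
  shows "0 \<le> game_value n m A"
  unfolding game_value_def
  by (rule cInf_greatest) (use unitvec_in_simplex[OF assms(2)] fval_nonneg[OF assms(1) _ assms(3)] in auto)

lemma minimax_col_payoff_ge:
  assumes "\<forall>i<n. \<forall>j<m. 0 \<le> A i j" "minimax_col n m A ystar" "x \<in> simplex n"
  shows "game_value n m A \<le> payoff n m A x ystar"
proof -
  have "ystar \<in> simplex m" using assms(2) by (simp add: minimax_col_def)
  then have "bdd_below ((\<lambda>x. payoff n m A x ystar) ` simplex n)"
    by (intro bdd_belowI2[of _ 0] payoff_nonneg[OF assms(1)])
  then have "Inf ((\<lambda>x. payoff n m A x ystar) ` simplex n) \<le> payoff n m A x ystar"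
    by (rule cInf_lower[rotated]) (use assms(3) in blast)
  then show ?thesis using assms(2) by (simp add: minimax_col_def)
qed

lemma best_pure_row_average_le_game_value:
  assumes "0 < n" "0 < m" "\<forall>i<n. \<forall>j<m. 0 \<le> A i j" "1 \<le> T"
    and ys: "\<And>t. t \<in> {1..T} \<Longrightarrow> ys t \<in> simplex m"
  shows "Min ((\<lambda>i. (1 / real T) * (\<Sum>t=1..T. payoff n m A (unitvec i) (ys t))) ` {..<n})
     \<le> game_value n m A"
  unfolding game_value_def
proof (rule cInf_greatest)
  show "fval n m A ` simplex n \<noteq> {}" using unitvec_in_simplex[OF assms(1)] by auto
next
  fix z assume "z \<in> fval n m A ` simplex n"
  then obtain x where x: "x \<in> simplex n" and z: "z = fval n m A x" by auto
  define a where "a i = (1 / real T) * (\<Sum>t=1..T. payoff n m A (unitvec i) (ys t))" for i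
  have "Min (a ` {..<n}) = (\<Sum>i<n. x i * Min (a ` {..<n}))"
    using x by (simp add: simplex_def sum_distrib_right[symmetric])
  also have "\<dots> \<le> (\<Sum>i<n. x i * a i)"
    using x by (intro sum_mono mult_left_mono) (auto simp: simplex_def)
  also have "\<dots> = (1 / real T) * (\<Sum>t=1..T. payoff n m A x (ys t))"
    unfolding a_def payoff_expand_left[of n m A x]
    by (subst sum.swap) (simp add: sum_distrib_left mult_ac)
  also have "\<dots> \<le> (1 / real T) * (\<Sum>t=1..T. fval n m A x)"
    using assms by (intro mult_left_mono sum_mono payoff_le_fval) auto
  also have "\<dots> = z" using assms(4) z by simp
  finally show "Min (a ` {..<n}) \<le> z" .
qed

lemma sum_alternating_ge:
  fixes g :: "nat \<Rightarrow> real"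
  assumes "\<And>k. v \<le> g (2*k+1)" "\<And>k. v + d \<le> g (2*k+2)"
  shows "real (2*K) * v + real K * d \<le> (\<Sum>t=1..2*K. g t)"
proof (induction K)
  case (Suc K)
  have "(\<Sum>t=1..2*Suc K. g t) = (\<Sum>t=1..2*K. g t) + g (2*K+1) + g (2*K+2)"
    by (simp add: sum.cl_ivl_Suc)
  then show ?case using Suc assms[of K] by (simp add: algebra_simps)
qed simp

lemma play_cong:
  assumes "\<And>s. 1 \<le> s \<Longrightarrow> s < t \<Longrightarrow> y s = y' s"
  shows "play alg y t = play alg y' t"
  unfolding play_def by (intro arg_cong[where f = alg] map_cong) (auto simp: assms)

locale lrca_run =
  fixes n m :: nat and A :: "nat \<Rightarrow> nat \<Rightarrow> real" and ystar :: "nat \<Rightarrow> real"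
    and alg :: "(nat \<Rightarrow> real) list \<Rightarrow> (nat \<Rightarrow> real)" and y :: "nat \<Rightarrow> nat \<Rightarrow> real"
  assumes rows: "0 < n" and cols: "0 < m"
    and entries: "\<forall>i<n. \<forall>j<m. 0 \<le> A i j \<and> A i j \<le> 1"
    and minimax: "minimax_col n m A ystar"
    and valid: "valid_alg n m alg"
    and stab: "stability_prop m alg ystar"
    and col: "lrca n m A ystar alg y"
begin

abbreviation row :: "nat \<Rightarrow> nat \<Rightarrow> real" where
  "row t \<equiv> play alg y t"

abbreviation gap :: "nat \<Rightarrow> real" where
  "gap t \<equiv> fval n m A (row t) - game_value n m A"

abbreviation scale :: real where
  "scale \<equiv> max (real n / 4) 2"

lemma entries_nonneg: "\<forall>i<n. \<forall>j<m. 0 \<le> A i j"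
  using entries by auto

lemma ystar_in_simplex: "ystar \<in> simplex m"
  using minimax by (simp add: minimax_col_def)

lemma col_odd: "1 \<le> t \<Longrightarrow> odd t \<Longrightarrow> y t = ystar"
  using col by (simp add: lrca_def)

lemma col_even:
  assumes "1 \<le> t" "even t"
  obtains j where "j < m"
    "\<forall>j'<m. payoff n m A (row (t - 1)) (unitvec j') \<le> payoff n m A (row (t - 1)) (unitvec j)"
    "y t = (\<lambda>k. (1 - gap (t - 1) / scale) * ystar k + gap (t - 1) / scale * unitvec j k)"
  using col assms unfolding lrca_def Let_def by blast

lemma mix_weight_bounds:
  assumes "row t \<in> simplex n"
  shows "0 \<le> gap t / scale" "gap t / scale \<le> 1"
proof -
  have "0 \<le> gap t" using game_value_le_fval[OF entries_nonneg cols assms] by simp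
  then show "0 \<le> gap t / scale" by simp
  have "fval n m A (row t) \<le> 1" by (rule fval_le_one[OF _ assms cols]) (use entries in auto)
  then have "gap t \<le> 1" using game_value_nonneg[OF entries_nonneg rows cols] by simp
  then show "gap t / scale \<le> 1" by simp
qed

lemma row_in_simplex_if_cols:
  assumes "\<And>s. 1 \<le> s \<Longrightarrow> s < t \<Longrightarrow> y s \<in> simplex m"
  shows "row t \<in> simplex n"
proof -
  have "set (map y [1..<t]) \<subseteq> simplex m" using assms by auto
  then show ?thesis using valid unfolding valid_alg_def play_def by blast
qed

lemma col_in_simplex: "1 \<le> t \<Longrightarrow> y t \<in> simplex m"
proof (induction t rule: less_induct)
  case (less t)
  show ?case
  proof (cases "odd t")
    case True
    then show ?thesis using col_odd less.prems ystar_in_simplex by simp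
  next
    case False
    then obtain j where j: "j < m"
      and yt: "y t = (\<lambda>k. (1 - gap (t - 1) / scale) * ystar k + gap (t - 1) / scale * unitvec j k)"
      using col_even less.prems by blast
    have "row (t - 1) \<in> simplex n" by (rule row_in_simplex_if_cols) (use less in auto)
    then show ?thesis
      unfolding yt by (intro mix_in_simplex ystar_in_simplex unitvec_in_simplex j mix_weight_bounds)
  qed
qed

lemma row_in_simplex: "row t \<in> simplex n"
  by (rule row_in_simplex_if_cols) (rule col_in_simplex)

lemma row_stable:
  assumes "even t" "2 \<le> t"
  shows "row t = row (t - 1)"
proof -
  have "y (t - 1) = ystar" using assms by (intro col_odd) auto
  then have "map y [1..<t] = map y [1..<t - 1] @ [ystar]"
    using assms(2) by (cases t) auto
  moreover have "set (map y [1..<t - 1]) \<subseteq> simplex m" using col_in_simplex by auto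
  ultimately show ?thesis using stab unfolding stability_prop_def play_def by simp
qed

lemma game_value_le_payoff_ystar: "game_value n m A \<le> payoff n m A (row t) ystar"
  by (rule minimax_col_payoff_ge[OF entries_nonneg minimax row_in_simplex])

lemma payoff_even_round_ge:
  assumes "even t" "2 \<le> t"
  shows "game_value n m A + (gap t)\<^sup>2 / scale \<le> payoff n m A (row t) (y t)"
proof -
  have row_eq: "row (t - 1) = row t" using row_stable[OF assms] by simp
  obtain j where j: "j < m"
    "\<forall>j'<m. payoff n m A (row t) (unitvec j') \<le> payoff n m A (row t) (unitvec j)"
    and yt: "y t = (\<lambda>k. (1 - gap t / scale) * ystar k + gap t / scale * unitvec j k)"
    using col_even[of t] assms unfolding row_eq by auto
  define \<alpha> where "\<alpha> = gap t / scale"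
  have "\<alpha> \<le> 1" unfolding \<alpha>_def by (rule mix_weight_bounds[OF row_in_simplex])
  have "payoff n m A (row t) (y t)
      = (1 - \<alpha>) * payoff n m A (row t) ystar + \<alpha> * payoff n m A (row t) (unitvec j)"
    unfolding yt \<alpha>_def by (rule payoff_mix_right)
  also have "\<dots> = (1 - \<alpha>) * payoff n m A (row t) ystar + \<alpha> * fval n m A (row t)"
    unfolding fval_eq_pure_best_response[OF j] ..
  also have "\<dots> \<ge> (1 - \<alpha>) * game_value n m A + \<alpha> * fval n m A (row t)"
    using game_value_le_payoff_ystar \<open>\<alpha> \<le> 1\<close> by (simp add: mult_left_mono)
  finally have "game_value n m A + \<alpha> * gap t \<le> payoff n m A (row t) (y t)"
    by (simp add: algebra_simps)
  then show ?thesis unfolding \<alpha>_def by (simp add: power2_eq_square)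
qed

lemma average_payoff_ge:
  assumes "0 < \<epsilon>" "\<forall>l\<ge>1. \<epsilon> < gap l" "1 \<le> K"
  shows "game_value n m A + \<epsilon>\<^sup>2 / (2 * scale)
    \<le> (1 / real (2 * K)) * (\<Sum>t=1..2*K. payoff n m A (row t) (y t))"
proof -
  have odd: "game_value n m A \<le> payoff n m A (row (2*k+1)) (y (2*k+1))" for k
    using game_value_le_payoff_ystar col_odd[of "2*k+1"] by simp
  have even: "game_value n m A + \<epsilon>\<^sup>2 / scale \<le> payoff n m A (row (2*k+2)) (y (2*k+2))" for k
  proof -
    have "\<epsilon> < gap (2*k+2)" using assms(2) by simp
    then have "\<epsilon>\<^sup>2 \<le> (gap (2*k+2))\<^sup>2" using assms(1) by (intro power_mono) auto
    then have "\<epsilon>\<^sup>2 / scale \<le> (gap (2*k+2))\<^sup>2 / scale" by (intro divide_right_mono) auto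
    then show ?thesis using payoff_even_round_ge[of "2*k+2"] by simp
  qed
  have "real (2*K) * game_value n m A + real K * (\<epsilon>\<^sup>2 / scale)
    \<le> (\<Sum>t=1..2*K. payoff n m A (row t) (y t))"
    by (rule sum_alternating_ge[where g = "\<lambda>t. payoff n m A (row t) (y t)", OF odd even])
  then show ?thesis using assms(3) by (simp add: field_simps)
qed

theorem exists_small_gap:
  assumes "no_regret n m A alg"
  shows "\<forall>\<epsilon>>0. \<exists>l\<ge>1. gap l \<le> \<epsilon>"
proof (rule ccontr)
  assume "\<not> ?thesis"
  then obtain \<epsilon> where \<epsilon>: "0 < \<epsilon>" "\<forall>l\<ge>1. \<epsilon> < gap l" by (meson not_le)
  (* no_regret also constrains the unused round 0 *)
  define y' where "y' = y(0 := ystar)"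
  have y'_simplex: "\<forall>t. y' t \<in> simplex m"
    unfolding y'_def using col_in_simplex ystar_in_simplex by (simp add: Suc_le_eq)
  have play_y': "play alg y' t = row t" for t
    unfolding y'_def by (rule play_cong) auto
  define regret where "regret T =
    Min ((\<lambda>i. (1 / real T) * (\<Sum>t=1..T. payoff n m A (unitvec i) (y' t))) ` {..<n})
      - (1 / real T) * (\<Sum>t=1..T. payoff n m A (play alg y' t) (y' t))" for T
  have "regret \<longlonglongrightarrow> 0"
    using assms y'_simplex unfolding no_regret_def regret_def by blast
  then have "(\<lambda>K. regret (2 * (K + 1))) \<longlonglongrightarrow> 0"
    by (rule LIMSEQ_subseq_LIMSEQ[unfolded o_def]) (auto simp: strict_mono_def)
  moreover have "regret (2 * (K + 1)) \<le> - (\<epsilon>\<^sup>2 / (2 * scale))" for K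
  proof -
    have "Min ((\<lambda>i. (1 / real (2 * (K + 1))) * (\<Sum>t=1..2 * (K + 1). payoff n m A (unitvec i) (y' t)))
        ` {..<n}) \<le> game_value n m A"
      by (rule best_pure_row_average_le_game_value[OF rows cols entries_nonneg])
        (use y'_simplex in auto)
    moreover have "(\<Sum>t=1..2 * (K + 1). payoff n m A (play alg y' t) (y' t))
        = (\<Sum>t=1..2 * (K + 1). payoff n m A (row t) (y t))"
      using play_y' unfolding y'_def by (intro sum.cong) auto
    ultimately show ?thesis
      using average_payoff_ge[OF \<epsilon>, of "K + 1"] unfolding regret_def by simp
  qed
  ultimately have "0 \<le> - (\<epsilon>\<^sup>2 / (2 * scale))"
    by (intro LIMSEQ_le_const2) auto
  then show False using \<epsilon>(1) by (simp add: divide_le_0_iff)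
qed

end

theorem theorem18:
  fixes n m :: nat and A :: "nat \<Rightarrow> nat \<Rightarrow> real"
    and ystar :: "nat \<Rightarrow> real"
    and alg :: "(nat \<Rightarrow> real) list \<Rightarrow> (nat \<Rightarrow> real)"
    and y :: "nat \<Rightarrow> nat \<Rightarrow> real"
  assumes entries: "\<forall>i<n. \<forall>j<m. 0 \<le> A i j \<and> A i j \<le> 1"
    and nonzero: "\<exists>i<n. \<exists>j<m. A i j \<noteq> 0"
    and minimax: "minimax_col n m A ystar"
    and valid: "valid_alg n m alg"
    and noregret: "no_regret n m A alg"
    and stab: "stability_prop m alg ystar"
    and col: "lrca n m A ystar alg y"
  shows "\<forall>\<epsilon>>0. \<exists>l\<ge>1. fval n m A (play alg y l) - game_value n m A \<le> \<epsilon>"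
proof -
  have "0 < n" "0 < m" using nonzero by auto
  then interpret lrca_run n m A ystar alg y
    using entries minimax valid stab col by unfold_locales
  show ?thesis using noregret by (rule exists_small_gap)
qed

end
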